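(* Let $U\subseteq\mathbb{R}^d$ be open and, for $i\in\{1,\dots,d\}$, let $\varphi_i\in C^2(U\times U;(0,\infty))$ with $\varphi_i(x)=\varphi_i(x_i,x_{i+d})$ (i.e. depending only on the coordinates $x_i,x_{i+d}$ of $x\in\mathbb{R}^{2d}$) be regularly non-separable, and all but at most one of them a.e. non-Gaussian. Set $\xi_i:=\partial_{x_i}\partial_{x_{i+d}}\log\varphi_i$. Then for any continuous $B:U\to\mathrm{GL}_d(\mathbb{R})$ such that $$\Lambda(u,v):=B(u)^\intercal\cdot\mathrm{diag}_{i}\big[\xi_i(u_i,v_i)\big]\cdot B(v),\qquad (u,v)\in U\times U,$$ has identically vanishing off-diagonal entries, we have $B(u)\in\mathrm{M}_d$ for every $u\in U$.
   Context: $\mathrm{M}_d$ denotes the real monomial $d\times d$ matrices (invertible diagonal times permutation). Each $\varphi_i$ is regarded as a function of $(x_i,x_{i+d})\in\pi_i(U)\times\pi_i(U)$ for the following notions. For $G\subseteq\mathbb{R}^2$ open, $\varsigma:G\to\mathbb{R}$ is pseudo-Gaussian if $\varsigma(x,y)=\varsigma_1(x)\varsigma_2(y)\exp(\pm\varsigma_3(x)\varsigma_3(y))$ on $G$ for some $\varsigma_1,\varsigma_2,\varsigma_3:\mathbb{R}\to\mathbb{R}$ and fixed sign, and separable if this holds with $\varsigma_3\equiv0$. It is strictly non-Gaussian (resp. strictly non-separable) if no restriction to a nonempty open subset of $G$ is pseudo-Gaussian (resp. separable), and a.e. non-Gaussian (resp. a.e. non-separable) if there is a closed Lebesgue-null set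 $\mathcal N\subset G$ with $\varsigma|_{G\setminus\mathcal N}$ strictly non-Gaussian (resp. strictly non-separable). A $C^2$ function $\varsigma:\tilde U\times\tilde U\to(0,\infty)$, $\tilde U\subseteq\mathbb{R}$ open, is regularly non-separable if it is a.e. non-separable and $(\partial_x\partial_y\log\varsigma)(x,x)\neq0$ for a.e. $x\in\tilde U$. *)

theory Defs
  imports "HOL-Analysis.Analysis"
begin

definition pseudo_gaussian_on :: "(real \<times> real) set \<Rightarrow> (real \<Rightarrow> real \<Rightarrow> real) \<Rightarrow> bool" where
  "pseudo_gaussian_on G \<sigma> \<longleftrightarrow>
     (\<exists>s1 s2 s3 :: real \<Rightarrow> real. \<exists>sg :: real. (sg = 1 \<or> sg = -1) \<and>
        (\<forall>(x,y)\<in>G. \<sigma> x y = s1 x * s2 y * exp (sg * (s3 x * s3 y))))"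

definition separable_on :: "(real \<times> real) set \<Rightarrow> (real \<Rightarrow> real \<Rightarrow> real) \<Rightarrow> bool" where
  "separable_on G \<sigma> \<longleftrightarrow> (\<exists>s1 s2 :: real \<Rightarrow> real. \<forall>(x,y)\<in>G. \<sigma> x y = s1 x * s2 y)"

definition strictly_non_gaussian_on :: "(real \<times> real) set \<Rightarrow> (real \<Rightarrow> real \<Rightarrow> real) \<Rightarrow> bool" where
  "strictly_non_gaussian_on G \<sigma> \<longleftrightarrow>
     (\<forall>W. open W \<and> W \<noteq> {} \<and> W \<subseteq> G \<longrightarrow> \<not> pseudo_gaussian_on W \<sigma>)"

definition strictly_non_separable_on :: "(real \<times> real) set \<Rightarrow> (real \<Rightarrow> real \<Rightarrow> real) \<Rightarrow> bool" where
  "strictly_non_separable_on G \<sigma> \<longleftrightarrow>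
     (\<forall>W. open W \<and> W \<noteq> {} \<and> W \<subseteq> G \<longrightarrow> \<not> separable_on W \<sigma>)"

definition ae_non_gaussian_on :: "(real \<times> real) set \<Rightarrow> (real \<Rightarrow> real \<Rightarrow> real) \<Rightarrow> bool" where
  "ae_non_gaussian_on G \<sigma> \<longleftrightarrow>
     (\<exists>N. N \<subseteq> G \<and> closedin (top_of_set G) N \<and> N \<in> null_sets lborel \<and>
          strictly_non_gaussian_on (G - N) \<sigma>)"

definition ae_non_separable_on :: "(real \<times> real) set \<Rightarrow> (real \<Rightarrow> real \<Rightarrow> real) \<Rightarrow> bool" where
  "ae_non_separable_on G \<sigma> \<longleftrightarrow>
     (\<exists>N. N \<subseteq> G \<and> closedin (top_of_set G) N \<and> N \<in> null_sets lborel \<and>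
          strictly_non_separable_on (G - N) \<sigma>)"

definition C2_on :: "(real \<times> real) set \<Rightarrow> (real \<Rightarrow> real \<Rightarrow> real) \<Rightarrow> bool" where
  "C2_on S f \<longleftrightarrow>
     (\<exists>fx fy fxx fxy fyx fyy :: real \<Rightarrow> real \<Rightarrow> real.
        (\<forall>(x,y)\<in>S.
           ((\<lambda>t. f t y) has_real_derivative fx x y) (at x) \<and>
           ((\<lambda>t. f x t) has_real_derivative fy x y) (at y) \<and>
           ((\<lambda>t. fx t y) has_real_derivative fxx x y) (at x) \<and>
           ((\<lambda>t. fx x t) has_real_derivative fxy x y) (at y) \<and>
           ((\<lambda>t. fy t y) has_real_derivative fyx x y) (at x) \<and>
           ((\<lambda>t. fy x t) has_real_derivative fyy x y) (at y)) \<and>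
        (\<forall>g \<in> {f, fx, fy, fxx, fxy, fyx, fyy}. continuous_on S (\<lambda>(x,y). g x y)))"

definition mixed_partial :: "(real \<Rightarrow> real \<Rightarrow> real) \<Rightarrow> real \<Rightarrow> real \<Rightarrow> real" where
  "mixed_partial g x y = deriv (\<lambda>s. deriv (\<lambda>t. g s t) y) x"

definition regularly_non_separable :: "real set \<Rightarrow> (real \<Rightarrow> real \<Rightarrow> real) \<Rightarrow> bool" where
  "regularly_non_separable V \<sigma> \<longleftrightarrow>
     open V \<and> C2_on (V \<times> V) \<sigma> \<and> (\<forall>x\<in>V. \<forall>y\<in>V. \<sigma> x y > 0) \<and>
     ae_non_separable_on (V \<times> V) \<sigma> \<and>
     (AE x in lborel. x \<in> V \<longrightarrow> mixed_partial (\<lambda>s t. ln (\<sigma> s t)) x x \<noteq> 0)"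

definition monomial_matrix :: "real^'n^'n \<Rightarrow> bool" where
  "monomial_matrix M \<longleftrightarrow>
     (\<exists>D P p. (\<forall>i j. i \<noteq> j \<longrightarrow> D$i$j = 0) \<and> (\<forall>i. D$i$i \<noteq> 0) \<and>
        p permutes (UNIV :: 'n set) \<and>
        P = (\<chi> i j. if j = p i then 1 else 0) \<and> M = D ** P)"

end

theory Submission
  imports Defs
begin

(*
  Suppose column i of B(u0) had nonzero entries in two rows k \<noteq> l, with \<phi>\<^sub>k a.e. non-Gaussian.
  Near u0 pick a point w with \<xi>\<^sub>m(w\<^sub>m, w\<^sub>m) \<noteq> 0 for all m and move only its k-th coordinate;
  along this line the diagonal factor D(s,t) of \<Lambda> varies only in its k-th entry.
  Taking quotients of the diagonal matrices B(s)\<^sup>T D(s,t) B(t) shows that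
  B(s)\<^sup>T diag(r) B(s)\<^sup>-\<^sup>T is diagonal for every cross-ratio r = D(s,t) D(c,c) / (D(c,t) D(s,c)),
  and since row i of B(s)\<^sup>T is nonzero at k and l, r\<^sub>k = r\<^sub>l = 1. Hence
  \<xi>\<^sub>k(s,t) \<xi>\<^sub>k(c,c) = \<xi>\<^sub>k(c,t) \<xi>\<^sub>k(s,c), and likewise \<xi>\<^sub>k(c,t) = \<xi>\<^sub>k(t,c).
  Integrating twice, log \<phi>\<^sub>k(s,t) = a(s) + b(t) + G(s) G(t) / \<xi>\<^sub>k(c,c) on a square around (c,c),
  so \<phi>\<^sub>k is pseudo-Gaussian on an open set, a contradiction. So every column of B(u) has a
  single nonzero entry, and an invertible such matrix is monomial.
*)

definition diag_mat :: "('n::finite \<Rightarrow> 'a::zero) \<Rightarrow> 'a^'n^'n" where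
  "diag_mat f = (\<chi> i j. if i = j then f i else 0)"

definition is_diag_mat :: "'a::zero^'n^'n \<Rightarrow> bool" where
  "is_diag_mat M \<longleftrightarrow> (\<forall>i j. i \<noteq> j \<longrightarrow> M $ i $ j = 0)"

lemma is_diag_mat_diag_mat [simp]: "is_diag_mat (diag_mat f)"
  by (simp add: is_diag_mat_def diag_mat_def)

lemma matrix_mul_diag_mat_right:
  fixes A :: "'a::semiring_1^'n^'m"
  shows "(A ** diag_mat f) $ i $ j = A $ i $ j * f j"
  by (simp add: matrix_matrix_mult_def diag_mat_def if_distrib cong: if_cong)

lemma is_diag_mat_mult_entry:
  fixes M :: "'a::semiring_1^'n^'n" and N :: "'a^'m^'n"
  assumes "is_diag_mat M"
  shows "(M ** N) $ i $ j = M $ i $ i * N $ i $ j"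
proof -
  have "(M ** N) $ i $ j = (\<Sum>k\<in>UNIV. M $ i $ k * N $ k $ j)"
    by (simp add: matrix_matrix_mult_def)
  also have "\<dots> = (\<Sum>k\<in>UNIV. if k = i then M $ i $ k * N $ k $ j else 0)"
    using assms by (intro sum.cong) (auto simp: is_diag_mat_def)
  finally show ?thesis by simp
qed

lemma is_diag_mat_mult:
  fixes M N :: "'a::semiring_1^'n^'n"
  shows "is_diag_mat M \<Longrightarrow> is_diag_mat N \<Longrightarrow> is_diag_mat (M ** N)"
  by (simp add: is_diag_mat_def is_diag_mat_mult_entry)

lemma diag_mat_mult: "diag_mat f ** diag_mat g = diag_mat (\<lambda>i. f i * g i :: 'a::semiring_1)"
  by (simp add: vec_eq_iff matrix_mul_diag_mat_right) (simp add: diag_mat_def)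

lemma diag_mat_one: "diag_mat (\<lambda>i. 1) = mat 1"
  by (simp add: diag_mat_def mat_def)

lemma transpose_component [simp]: "transpose A $ i $ j = A $ j $ i"
  by (simp add: transpose_def)

lemma transpose_diag_mat [simp]: "transpose (diag_mat f) = diag_mat f"
  by (simp add: diag_mat_def vec_eq_iff)

lemma is_diag_mat_transpose: "is_diag_mat M \<Longrightarrow> is_diag_mat (transpose M)"
  by (simp add: is_diag_mat_def)

lemma is_diag_mat_right_inverse:
  fixes M R :: "'a::semiring_1_no_zero_divisors^'n^'n"
  assumes "is_diag_mat M" "M ** R = mat 1"
  shows "is_diag_mat R"
  unfolding is_diag_mat_def
proof (intro allI impI)
  fix i j :: 'n assume "i \<noteq> j"
  have row: "M $ i $ i * R $ i $ j' = (if i = j' then 1 else 0)" for j'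
    using is_diag_mat_mult_entry[OF assms(1), of R i j'] assms(2) by (simp add: mat_def)
  from row[of i] have "M $ i $ i \<noteq> 0" by auto
  with row[of j] \<open>i \<noteq> j\<close> show "R $ i $ j = 0" by simp
qed

lemma matrix_inv_right:
  assumes "invertible A" shows "A ** matrix_inv A = mat 1"
  using someI_ex[OF assms[unfolded invertible_def]] by (simp add: matrix_inv_def)

lemma matrix_inv_left:
  assumes "invertible A" shows "matrix_inv A ** A = mat 1"
  using someI_ex[OF assms[unfolded invertible_def]] by (simp add: matrix_inv_def)

lemma invertible_matrix_inv:
  fixes A :: "'a::semiring_1^'n^'n"
  assumes "invertible A" shows "invertible (matrix_inv A)"
  using matrix_inv_left[OF assms] matrix_inv_right[OF assms] invertible_def by blast

lemma is_diag_mat_quotient: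
  fixes P P' Q :: "'a::field^'n^'n"
  assumes "invertible P'" "invertible Q" "\<forall>i. g i \<noteq> 0"
    and "is_diag_mat (P ** diag_mat f ** Q)" "is_diag_mat (P' ** diag_mat g ** Q)"
  shows "is_diag_mat (P ** diag_mat (\<lambda>i. f i / g i) ** matrix_inv P')"
proof -
  define R where "R = matrix_inv Q ** diag_mat (\<lambda>i. inverse (g i)) ** matrix_inv P'"
  have QQ: "Q ** (matrix_inv Q ** Y) = Y" for Y
    by (simp add: matrix_mul_assoc matrix_inv_right[OF assms(2)])
  have cancel: "X ** diag_mat h ** Q ** R = X ** diag_mat (\<lambda>i. h i / g i) ** matrix_inv P'" for X h
  proof -
    have "X ** diag_mat h ** Q ** R
        = X ** (diag_mat h ** (Q ** (matrix_inv Q ** (diag_mat (\<lambda>i. inverse (g i)) ** matrix_inv P'))))"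
      by (simp add: R_def matrix_mul_assoc)
    also have "\<dots> = X ** (diag_mat h ** diag_mat (\<lambda>i. inverse (g i))) ** matrix_inv P'"
      unfolding QQ by (simp add: matrix_mul_assoc)
    finally show ?thesis
      by (simp add: diag_mat_mult divide_inverse)
  qed
  have "P' ** diag_mat g ** Q ** R = mat 1"
    using cancel[of P' g] assms(3) by (simp add: diag_mat_one matrix_inv_right[OF assms(1)])
  then have "is_diag_mat R"
    using assms(5) by (rule is_diag_mat_right_inverse[rotated])
  then show ?thesis
    using is_diag_mat_mult[OF assms(4)] cancel[of P f] by metis
qed

lemma is_diag_mat_similar_eq:
  fixes P :: "'a::field^'n^'n"
  assumes "invertible P" "is_diag_mat (P ** diag_mat h ** matrix_inv P)"
    and "P $ i $ k \<noteq> 0" "P $ i $ l \<noteq> 0"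
  shows "h k = h l"
proof -
  define Z where "Z = P ** diag_mat h ** matrix_inv P"
  have "Z ** P = P ** diag_mat h"
    by (simp add: Z_def flip: matrix_mul_assoc add: matrix_inv_left[OF assms(1)])
  then have "Z $ i $ i * P $ i $ j = P $ i $ j * h j" for j
    by (metis assms(2) Z_def is_diag_mat_mult_entry matrix_mul_diag_mat_right)
  from this[of k] this[of l] assms(3,4) show ?thesis
    by (metis mult.commute mult_left_cancel)
qed

lemma is_diag_mat_ratio_eq:
  fixes P Q :: "'a::field^'n^'n"
  assumes "invertible P" "invertible Q" "\<forall>i. g i \<noteq> 0"
    and "is_diag_mat (P ** diag_mat f ** Q)" "is_diag_mat (P ** diag_mat g ** Q)"
    and "P $ i $ k \<noteq> 0" "P $ i $ l \<noteq> 0"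
  shows "f k / g k = f l / g l"
  using is_diag_mat_similar_eq[OF assms(1) is_diag_mat_quotient[OF assms(1-5)] assms(6,7)] .

lemma invertible_column_nonzero:
  fixes M :: "'a::field^'n^'n"
  assumes "invertible M"
  shows "\<exists>k. M $ k $ j \<noteq> 0"
proof (rule ccontr)
  assume "\<nexists>k. M $ k $ j \<noteq> 0"
  then have "column j M = 0" by (simp add: column_def vec_eq_iff)
  then show False by (metis assms det_zero_column(2) invertible_det_nz)
qed

lemma monomial_matrixI:
  fixes M :: "real^'n^'n"
  assumes "invertible M"
    and single: "\<And>j k l. M $ k $ j \<noteq> 0 \<Longrightarrow> M $ l $ j \<noteq> 0 \<Longrightarrow> k = l"
  shows "monomial_matrix M"
proof -
  obtain r where r: "\<And>j. M $ r j $ j \<noteq> 0"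
    using invertible_column_nonzero[OF assms(1)] by metis
  have "surj r"
  proof
    show "UNIV \<subseteq> range r"
    proof
      fix k
      obtain j where "transpose M $ j $ k \<noteq> 0"
        using invertible_column_nonzero[OF transpose_invertible[OF assms(1)]] by blast
      then have "k = r j" using single r by simp
      then show "k \<in> range r" by simp
    qed
  qed simp
  then have "bij r" by (simp add: bij_def finite_UNIV_surj_inj)
  define p where "p = inv r"
  have p: "p permutes UNIV"
    using \<open>bij r\<close> unfolding p_def by (auto intro: permutes_inv bij_imp_permutes)
  have rp: "r (p i) = i" "p (r j) = j" for i j
    using \<open>bij r\<close> bij_inv_eq_iff unfolding p_def by metis+
  define D where "D = diag_mat (\<lambda>i. M $ i $ p i)"
  define P :: "real^'n^'n" where "P = (\<chi> i j. if j = p i then 1 else 0)"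
  have "M $ i $ j = (D ** P) $ i $ j" for i j
  proof (cases "j = p i")
    case False
    then have "M $ i $ j = 0" using single r rp(2) by metis
    then show ?thesis using False by (simp add: D_def P_def is_diag_mat_mult_entry)
  qed (simp add: D_def P_def is_diag_mat_mult_entry, simp add: diag_mat_def)
  then have "M = D ** P" by (simp add: vec_eq_iff)
  moreover have "D $ i $ i \<noteq> 0" for i using r[of "p i"] by (simp add: D_def diag_mat_def rp(1))
  ultimately show ?thesis
    unfolding monomial_matrix_def using p P_def
    by (intro exI[of _ D] exI[of _ P] exI[of _ p]) (simp add: D_def diag_mat_def)
qed

locale diag_pencil =
  fixes S :: "'a set" and B :: "'a \<Rightarrow> real^'n^'n" and D :: "'a \<Rightarrow> 'a \<Rightarrow> 'n \<Rightarrow> real"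
    and i k l :: 'n
  assumes diag: "\<And>u v. u \<in> S \<Longrightarrow> v \<in> S \<Longrightarrow> is_diag_mat (transpose (B u) ** diag_mat (D u v) ** B v)"
    and invertible: "\<And>u. u \<in> S \<Longrightarrow> invertible (B u)"
    and column_nonzero: "\<And>u. u \<in> S \<Longrightarrow> B u $ k $ i \<noteq> 0 \<and> B u $ l $ i \<noteq> 0"
    and D_nonzero: "\<And>u v m. u \<in> S \<Longrightarrow> v \<in> S \<Longrightarrow> D u v m \<noteq> 0"
begin

lemma diag_swap:
  assumes "u \<in> S" "v \<in> S"
  shows "is_diag_mat (transpose (B u) ** diag_mat (D v u) ** B v)"
proof -
  have "is_diag_mat (transpose (transpose (B v) ** diag_mat (D v u) ** B u))"
    using diag[OF assms(2,1)] by (rule is_diag_mat_transpose)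
  then show ?thesis by (simp add: matrix_transpose_mul matrix_mul_assoc)
qed

lemma ratio_eq:
  assumes "u \<in> S" "v \<in> S" "is_diag_mat (transpose (B u) ** diag_mat f ** B v)"
  shows "f k / D u v k = f l / D u v l"
  using assms D_nonzero column_nonzero
  by (intro is_diag_mat_ratio_eq[where Q = "B v" and i = i])
    (auto simp: transpose_invertible invertible diag)

lemma symmetric_entry:
  assumes "u \<in> S" "v \<in> S" "D v u l = D u v l"
  shows "D v u k = D u v k"
  using ratio_eq[OF assms(1,2) diag_swap[OF assms(1,2)]] assms D_nonzero[OF assms(1,2)]
  by simp

lemma rank_one_entry:
  assumes "u \<in> S" "v \<in> S" "w \<in> S" "D u v l = D w v l" "D u w l = D w w l"
  shows "D u v k * D w w k = D w v k * D u w k"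
proof -
  define T where "T u = transpose (B u)" for u
  have T: "invertible (T u)" "T u $ i $ k \<noteq> 0" "T u $ i $ l \<noteq> 0" if "u \<in> S" for u
    using invertible[OF that] column_nonzero[OF that] by (simp_all add: T_def transpose_invertible)
  have quotient: "is_diag_mat (T u ** diag_mat (\<lambda>m. D u v m / D w v m) ** matrix_inv (T w))"
    if "v \<in> S" for v
    using that assms(1,3) T D_nonzero diag unfolding T_def
    by (intro is_diag_mat_quotient[of _ "B v"]) (auto simp: invertible)
  have "(D u v k / D w v k) / (D u w k / D w w k) = (D u v l / D w v l) / (D u w l / D w w l)"
    using assms(1,3) T D_nonzero quotient[OF assms(2)] quotient[OF assms(3)]
    by (intro is_diag_mat_ratio_eq[where Q = "matrix_inv (T w)" and i = i]) (auto simp: invertible_matrix_inv)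
  then show ?thesis
    using assms D_nonzero by (simp add: field_simps)
qed

end

lemma open_subset_null_set_lborel:
  fixes S N :: "'a::euclidean_space set"
  assumes "N \<in> null_sets lborel" "open S" "S \<subseteq> N"
  shows "S = {}"
proof -
  have "N \<in> null_sets lebesgue" using assms(1) by (rule null_sets_completionI)
  then have "negligible S"
    using assms(3) negligible_subset by (auto simp: negligible_iff_null_sets)
  then show ?thesis using assms(2) open_not_negligible by blast
qed

lemma AE_lborel_exists_in_open:
  fixes S :: "'a::euclidean_space set"
  assumes "AE x in lborel. P x" "open S" "S \<noteq> {}"
  shows "\<exists>x\<in>S. P x"
proof (rule ccontr)
  assume none: "\<not> (\<exists>x\<in>S. P x)"
  obtain N where N: "{x \<in> space lborel. \<not> P x} \<subseteq> N" "N \<in> null_sets lborel"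
    using assms(1) by (metis AE_E null_setsI)
  have "S \<subseteq> N" using N(1) none by auto
  then show False using open_subset_null_set_lborel[OF N(2) assms(2)] assms(3) by blast
qed

lemma AE_lborel_exists_in_box_cart:
  fixes a b :: "real^'n"
  assumes "\<And>m. AE x in lborel. P m x" "box a b \<noteq> {}"
  shows "\<exists>w\<in>box a b. \<forall>m. P m (w $ m)"
proof -
  have "\<exists>x\<in>{a $ m<..<b $ m}. P m x" for m
    using assms by (intro AE_lborel_exists_in_open) (auto simp: interval_ne_empty_cart not_le)
  then obtain x where "\<And>m. x m \<in> {a $ m<..<b $ m} \<and> P m (x m)" by metis
  then show ?thesis by (intro bexI[of _ "\<chi> m. x m"]) (auto simp: mem_box_cart)
qed

lemma pseudo_gaussian_on_subset:
  "pseudo_gaussian_on A \<sigma> \<Longrightarrow> W \<subseteq> A \<Longrightarrow> pseudo_gaussian_on W \<sigma>"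
  unfolding pseudo_gaussian_on_def by blast

lemma ae_non_gaussian_on_imp_not_pseudo_gaussian_on:
  assumes "ae_non_gaussian_on G \<sigma>" "open W" "W \<noteq> {}" "W \<subseteq> G"
  shows "\<not> pseudo_gaussian_on W \<sigma>"
proof
  assume pg: "pseudo_gaussian_on W \<sigma>"
  obtain N where N: "closedin (top_of_set G) N" "N \<in> null_sets lborel"
      "strictly_non_gaussian_on (G - N) \<sigma>"
    using assms(1) unfolding ae_non_gaussian_on_def by blast
  then obtain C where "closed C" "N = G \<inter> C" by (auto simp: closedin_closed)
  then have "W - N = W - C" using assms(4) by blast
  then have "open (W - N)" using \<open>closed C\<close> assms(2) by (simp add: open_Diff)
  moreover have "W - N \<noteq> {}"
    using open_subset_null_set_lborel[OF N(2) assms(2)] assms(3) by blast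
  moreover have "W - N \<subseteq> G - N" using assms(4) by blast
  moreover have "pseudo_gaussian_on (W - N) \<sigma>"
    using pg by (rule pseudo_gaussian_on_subset) blast
  ultimately show False using N(3) unfolding strictly_non_gaussian_on_def by blast
qed

lemma C2_on_ln_mixed_partial:
  fixes \<phi> :: "real \<Rightarrow> real \<Rightarrow> real"
  assumes V: "open V" and C2: "C2_on (V \<times> V) \<phi>" and pos: "\<forall>x\<in>V. \<forall>y\<in>V. \<phi> x y > 0"
  obtains Ly where
    "\<And>x y. x \<in> V \<Longrightarrow> y \<in> V \<Longrightarrow> ((\<lambda>t. ln (\<phi> x t)) has_real_derivative Ly x y) (at y)"
    "\<And>x y. x \<in> V \<Longrightarrow> y \<in> V \<Longrightarrow>
       ((\<lambda>s. Ly s y) has_real_derivative mixed_partial (\<lambda>s t. ln (\<phi> s t)) x y) (at x)"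
    "continuous_on (V \<times> V) (\<lambda>(x, y). mixed_partial (\<lambda>s t. ln (\<phi> s t)) x y)"
proof -
  obtain fx fy fxx fxy fyx fyy :: "real \<Rightarrow> real \<Rightarrow> real" where
    D: "\<forall>(x,y)\<in>V \<times> V.
           ((\<lambda>t. \<phi> t y) has_real_derivative fx x y) (at x) \<and>
           ((\<lambda>t. \<phi> x t) has_real_derivative fy x y) (at y) \<and>
           ((\<lambda>t. fx t y) has_real_derivative fxx x y) (at x) \<and>
           ((\<lambda>t. fx x t) has_real_derivative fxy x y) (at y) \<and>
           ((\<lambda>t. fy t y) has_real_derivative fyx x y) (at x) \<and>
           ((\<lambda>t. fy x t) has_real_derivative fyy x y) (at y)"
    and C: "\<forall>g \<in> {\<phi>, fx, fy, fxx, fxy, fyx, fyy}. continuous_on (V \<times> V) (\<lambda>(x,y). g x y)"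
    using C2 unfolding C2_on_def by blast
  define Ly where "Ly x y = fy x y / \<phi> x y" for x y
  define \<xi> where "\<xi> x y = (fyx x y * \<phi> x y - fy x y * fx x y) / (\<phi> x y * \<phi> x y)" for x y
  have dL: "((\<lambda>t. ln (\<phi> x t)) has_real_derivative Ly x y) (at y)" if "x \<in> V" "y \<in> V" for x y
  proof -
    have "((\<lambda>t. \<phi> x t) has_real_derivative fy x y) (at y)" using D that by auto
    from DERIV_chain2[OF DERIV_ln_divide[OF pos[rule_format, OF that]] this]
    show ?thesis by (simp add: Ly_def)
  qed
  have dLy: "((\<lambda>s. Ly s y) has_real_derivative \<xi> x y) (at x)" if "x \<in> V" "y \<in> V" for x y
  proof -
    have "((\<lambda>t. fy t y) has_real_derivative fyx x y) (at x)"
      and "((\<lambda>t. \<phi> t y) has_real_derivative fx x y) (at x)" using D that by auto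
    moreover have "\<phi> x y \<noteq> 0" using pos that by force
    ultimately show ?thesis
      using DERIV_divide by (fastforce simp: Ly_def \<xi>_def)
  qed
  have mixed: "mixed_partial (\<lambda>s t. ln (\<phi> s t)) x y = \<xi> x y" if "x \<in> V" "y \<in> V" for x y
  proof -
    have "((\<lambda>s. deriv (\<lambda>t. ln (\<phi> s t)) y) has_real_derivative \<xi> x y) (at x)"
      using dL that(2) by (intro has_field_derivative_transform_within_open[OF dLy[OF that] V that(1)])
        (metis DERIV_imp_deriv)
    then show ?thesis unfolding mixed_partial_def by (rule DERIV_imp_deriv)
  qed
  have "continuous_on (V \<times> V) (\<lambda>(x, y). \<xi> x y)"
    using C pos unfolding \<xi>_def case_prod_beta
    by (intro continuous_intros) (auto simp: case_prod_beta, metis less_irrefl)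
  then have "continuous_on (V \<times> V) (\<lambda>(x, y). mixed_partial (\<lambda>s t. ln (\<phi> s t)) x y)"
    by (rule continuous_on_cong[THEN iffD1, rotated 2]) (auto simp: mixed)
  moreover have "((\<lambda>s. Ly s y) has_real_derivative mixed_partial (\<lambda>s t. ln (\<phi> s t)) x y) (at x)"
    if "x \<in> V" "y \<in> V" for x y
    using dLy[OF that] mixed[OF that] by simp
  ultimately show thesis using dL that by blast
qed

lemma DERIV_eq_diff_on_convex:
  fixes f g :: "real \<Rightarrow> real"
  assumes "convex J"
    and "\<And>s. s \<in> J \<Longrightarrow> (f has_real_derivative d s) (at s)"
    and "\<And>s. s \<in> J \<Longrightarrow> (g has_real_derivative d s) (at s)"
    and "x \<in> J" "c \<in> J"
  shows "f x - f c = g x - g c"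
proof -
  have "((\<lambda>s. f s - g s) has_real_derivative 0) (at s within J)" if "s \<in> J" for s
    using DERIV_diff[OF assms(2,3)[OF that]] by (simp add: has_field_derivative_at_within)
  then obtain C where "\<forall>s\<in>J. f s - g s = C"
    using has_field_derivative_zero_constant[OF assms(1)] by blast
  then show ?thesis using assms(4,5) by (simp add: algebra_simps)
qed

lemma rank_one_mixed_partial_decomposition:
  fixes L Ly \<xi> :: "real \<Rightarrow> real \<Rightarrow> real"
  assumes J: "convex J" "c \<in> J"
    and dL: "\<And>x y. x \<in> J \<Longrightarrow> y \<in> J \<Longrightarrow> (L x has_real_derivative Ly x y) (at y)"
    and dLy: "\<And>x y. x \<in> J \<Longrightarrow> y \<in> J \<Longrightarrow> ((\<lambda>s. Ly s y) has_real_derivative \<xi> x y) (at x)"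
    and K: "\<xi> c c \<noteq> 0"
    and sym: "\<And>y. y \<in> J \<Longrightarrow> \<xi> c y = \<xi> y c"
    and rank_one: "\<And>x y. x \<in> J \<Longrightarrow> y \<in> J \<Longrightarrow> \<xi> x y * \<xi> c c = \<xi> c y * \<xi> x c"
    and xy: "x \<in> J" "y \<in> J"
  shows "L x y = L x c + L c y - L c c + (Ly x c - Ly c c) * (Ly y c - Ly c c) / \<xi> c c"
proof -
  define G where "G s = (Ly s c - Ly c c) / \<xi> c c" for s
  have dG: "(G has_real_derivative \<xi> s c / \<xi> c c) (at s)" if "s \<in> J" for s
    unfolding G_def using dLy[OF that J(2)] K by (auto intro!: derivative_eq_intros)
  have Ly_diff: "Ly x' t - Ly c t = \<xi> t c * G x'" if "x' \<in> J" "t \<in> J" for x' t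
  proof -
    have "((\<lambda>s. \<xi> t c * G s) has_real_derivative \<xi> s t) (at s)" if "s \<in> J" for s
    proof -
      have "\<xi> s t * \<xi> c c = \<xi> t c * \<xi> s c"
        using rank_one[OF that \<open>t \<in> J\<close>] sym[OF \<open>t \<in> J\<close>] by simp
      then have "\<xi> t c * (\<xi> s c / \<xi> c c) = \<xi> s t"
        using K by (simp add: divide_eq_eq)
      then show ?thesis using DERIV_cmult[OF dG[OF that], of "\<xi> t c"] by simp
    qed
    then have "Ly x' t - Ly c t = \<xi> t c * G x' - \<xi> t c * G c"
      using J that by (intro DERIV_eq_diff_on_convex[where d = "\<lambda>s. \<xi> s t"]) (auto intro: dLy)
    then show ?thesis by (simp add: G_def)
  qed
  have "((\<lambda>t. L c t + (Ly x c - Ly c c) * G t) has_real_derivative Ly x t) (at t)" if "t \<in> J" for t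
  proof -
    have "((\<lambda>t. L c t + (Ly x c - Ly c c) * G t) has_real_derivative
        Ly c t + (Ly x c - Ly c c) * (\<xi> t c / \<xi> c c)) (at t)"
      by (rule DERIV_add[OF dL[OF J(2) that] DERIV_cmult[OF dG[OF that]]])
    moreover have "Ly c t + (Ly x c - Ly c c) * (\<xi> t c / \<xi> c c) = Ly x t"
      using Ly_diff[OF xy(1) that] by (simp add: G_def algebra_simps)
    ultimately show ?thesis by simp
  qed
  then have "L x y - L x c = (L c y + (Ly x c - Ly c c) * G y) - (L c c + (Ly x c - Ly c c) * G c)"
    using J xy by (intro DERIV_eq_diff_on_convex[where d = "Ly x"]) (auto intro: dL)
  then show ?thesis by (simp add: G_def)
qed

lemma pseudo_gaussian_onI:
  fixes \<sigma> :: "real \<Rightarrow> real \<Rightarrow> real"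
  assumes "K \<noteq> 0"
    and "\<And>x y. (x, y) \<in> S \<Longrightarrow> \<sigma> x y = exp (\<alpha> x + \<beta> y + \<gamma> x * \<gamma> y / K)"
  shows "pseudo_gaussian_on S \<sigma>"
proof -
  define s3 where "s3 x = \<gamma> x / sqrt \<bar>K\<bar>" for x
  have "\<gamma> x * \<gamma> y / K = sgn K * (s3 x * s3 y)" for x y
  proof -
    have "s3 x * s3 y = \<gamma> x * \<gamma> y / \<bar>K\<bar>"
      by (simp add: s3_def)
    then show ?thesis using assms(1) by (simp add: sgn_if abs_if)
  qed
  then have "\<forall>(x, y)\<in>S. \<sigma> x y = exp (\<alpha> x) * exp (\<beta> y) * exp (sgn K * (s3 x * s3 y))"
    using assms(2) by (clarsimp simp: exp_add)
  moreover have "sgn K = 1 \<or> sgn K = -1" using assms(1) by (simp add: sgn_if)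
  ultimately show ?thesis unfolding pseudo_gaussian_on_def
    by (intro exI[of _ "\<lambda>x. exp (\<alpha> x)"] exI[of _ "\<lambda>y. exp (\<beta> y)"] exI[of _ s3] exI[of _ "sgn K"])
      blast
qed

lemma pseudo_gaussian_on_if_rank_one_log_mixed_partial:
  fixes \<phi> :: "real \<Rightarrow> real \<Rightarrow> real"
  defines "\<xi> \<equiv> mixed_partial (\<lambda>s t. ln (\<phi> s t))"
  assumes V: "open V" "C2_on (V \<times> V) \<phi>" "\<forall>x\<in>V. \<forall>y\<in>V. \<phi> x y > 0"
    and J: "J \<subseteq> V" "convex J" "c \<in> J"
    and K: "\<xi> c c \<noteq> 0"
    and sym: "\<And>y. y \<in> J \<Longrightarrow> \<xi> c y = \<xi> y c"
    and rank_one: "\<And>x y. x \<in> J \<Longrightarrow> y \<in> J \<Longrightarrow> \<xi> x y * \<xi> c c = \<xi> c y * \<xi> x c"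
  shows "pseudo_gaussian_on (J \<times> J) \<phi>"
proof -
  obtain Ly where
    dL: "\<And>x y. x \<in> V \<Longrightarrow> y \<in> V \<Longrightarrow> ((\<lambda>t. ln (\<phi> x t)) has_real_derivative Ly x y) (at y)" and
    dLy: "\<And>x y. x \<in> V \<Longrightarrow> y \<in> V \<Longrightarrow> ((\<lambda>s. Ly s y) has_real_derivative \<xi> x y) (at x)"
    using C2_on_ln_mixed_partial[OF V] unfolding \<xi>_def by metis
  have "\<phi> x y = exp ((ln (\<phi> x c) - ln (\<phi> c c)) + ln (\<phi> c y)
      + (Ly x c - Ly c c) * (Ly y c - Ly c c) / \<xi> c c)" if "(x, y) \<in> J \<times> J" for x y
  proof -
    have "\<phi> x y > 0" using that J(1) V(3) by blast
    then have "\<phi> x y = exp (ln (\<phi> x y))" by simp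
    also have "ln (\<phi> x y) = (ln (\<phi> x c) - ln (\<phi> c c)) + ln (\<phi> c y)
        + (Ly x c - Ly c c) * (Ly y c - Ly c c) / \<xi> c c"
      using rank_one_mixed_partial_decomposition[where L = "\<lambda>x y. ln (\<phi> x y)",
          OF J(2,3) dL dLy K sym rank_one] that J(1) by (simp add: subset_iff)
    finally show ?thesis .
  qed
  then show ?thesis using K by (rule pseudo_gaussian_onI[rotated])
qed

lemma continuous_on_nonzero_square_ball:
  fixes f :: "'a::metric_space \<Rightarrow> 'a \<Rightarrow> real"
  assumes "continuous_on (I \<times> I) (\<lambda>(x, y). f x y)" "open I" "c \<in> I" "f c c \<noteq> 0"
  obtains e where "e > 0" "ball c e \<subseteq> I" "\<And>x y. x \<in> ball c e \<Longrightarrow> y \<in> ball c e \<Longrightarrow> f x y \<noteq> 0"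
proof -
  define S where "S = (I \<times> I) \<inter> (\<lambda>(x, y). f x y) -` (- {0})"
  have "open S" unfolding S_def
    using assms(1,2) by (intro continuous_open_preimage open_Times open_Compl) auto
  moreover have "(c, c) \<in> S" using assms(3,4) by (simp add: S_def)
  ultimately obtain A B where "open A" "open B" "(c, c) \<in> A \<times> B" "A \<times> B \<subseteq> S"
    by (rule open_prod_elim)
  moreover obtain e where "e > 0" "ball c e \<subseteq> A \<inter> B"
    using openE[of "A \<inter> B" c] calculation by blast
  ultimately have "(x, y) \<in> S" if "x \<in> ball c e" "y \<in> ball c e" for x y
    using that by blast
  then show thesis using \<open>e > 0\<close> by (intro that) (auto simp: S_def)
qed

lemma continuous_on_nonzero_entries_box:
  fixes B :: "real^'d \<Rightarrow> real^'n^'m"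
  assumes "open U" "continuous_on U B" "u0 \<in> U" "B u0 $ k $ i \<noteq> 0" "B u0 $ l $ i \<noteq> 0"
  obtains a b where "u0 \<in> box a b"
    "\<And>u. u \<in> box a b \<Longrightarrow> u \<in> U \<and> B u $ k $ i \<noteq> 0 \<and> B u $ l $ i \<noteq> 0"
proof -
  define W where "W = U \<inter> (\<lambda>u. (B u $ k $ i, B u $ l $ i)) -` ((- {0}) \<times> (- {0}))"
  have "open W" unfolding W_def
    using assms(1,2) by (intro continuous_open_preimage open_Times open_Compl continuous_intros) auto
  moreover have "u0 \<in> W" using assms(3-5) by (simp add: W_def)
  ultimately obtain a b where "u0 \<in> box a b" "box a b \<subseteq> W" by (rule open_contains_box)
  then show thesis using that by (auto simp: W_def)
qed

lemma pseudo_gaussian_on_coordinate_line: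
  fixes B :: "real^'d \<Rightarrow> real^'d^'d" and \<phi> :: "'d \<Rightarrow> real \<Rightarrow> real \<Rightarrow> real"
    and w :: "real^'d" and k :: 'd
  defines "\<xi> \<equiv> \<lambda>m. mixed_partial (\<lambda>s t. ln (\<phi> m s t))"
    and "line \<equiv> \<lambda>t. \<chi> j. if j = k then t else w $ j"
  assumes V: "open V" "C2_on (V \<times> V) (\<phi> k)" "\<forall>x\<in>V. \<forall>y\<in>V. \<phi> k x y > 0"
    and J: "J \<subseteq> V" "convex J" "w $ k \<in> J"
    and diag: "\<And>u v. u \<in> U \<Longrightarrow> v \<in> U \<Longrightarrow>
      is_diag_mat (transpose (B u) ** diag_mat (\<lambda>m. \<xi> m (u $ m) (v $ m)) ** B v)"
    and invertible: "\<And>u. u \<in> U \<Longrightarrow> invertible (B u)"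
    and line: "\<And>t. t \<in> J \<Longrightarrow> line t \<in> U \<and> B (line t) $ k $ i \<noteq> 0 \<and> B (line t) $ l $ i \<noteq> 0"
    and "k \<noteq> l"
    and nonzero: "\<And>m. m \<noteq> k \<Longrightarrow> \<xi> m (w $ m) (w $ m) \<noteq> 0"
      "\<And>s t. s \<in> J \<Longrightarrow> t \<in> J \<Longrightarrow> \<xi> k s t \<noteq> 0"
  shows "pseudo_gaussian_on (J \<times> J) (\<phi> k)"
proof -
  have line_nth: "line t $ k = t" "m \<noteq> k \<Longrightarrow> line t $ m = w $ m" for t m
    by (simp_all add: line_def)
  interpret diag_pencil "line ` J" B "\<lambda>u v m. \<xi> m (u $ m) (v $ m)" i k l
  proof
    show "\<xi> m (u $ m) (v $ m) \<noteq> 0" if "u \<in> line ` J" "v \<in> line ` J" for u v m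
      using that nonzero line_nth by (cases "m = k") auto
  qed (use diag invertible line in blast)+
  define c where "c = w $ k"
  have c: "c \<in> J" using J(3) by (simp add: c_def)
  show ?thesis unfolding \<xi>_def
  proof (rule pseudo_gaussian_on_if_rank_one_log_mixed_partial[OF V J(1,2) c(1)])
    show "mixed_partial (\<lambda>s t. ln (\<phi> k s t)) c c \<noteq> 0"
      using nonzero(2)[OF c(1) c(1)] by (simp add: \<xi>_def)
    show "mixed_partial (\<lambda>s t. ln (\<phi> k s t)) c y = mixed_partial (\<lambda>s t. ln (\<phi> k s t)) y c"
      if "y \<in> J" for y
      using symmetric_entry[of "line c" "line y"] c that \<open>k \<noteq> l\<close> by (simp add: line_nth \<xi>_def)
    show "mixed_partial (\<lambda>s t. ln (\<phi> k s t)) x y * mixed_partial (\<lambda>s t. ln (\<phi> k s t)) c c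
        = mixed_partial (\<lambda>s t. ln (\<phi> k s t)) c y * mixed_partial (\<lambda>s t. ln (\<phi> k s t)) x c"
      if "x \<in> J" "y \<in> J" for x y
      using rank_one_entry[of "line x" "line y" "line c"] c that \<open>k \<noteq> l\<close> by (simp add: line_nth \<xi>_def)
  qed
qed

lemma split_column_imp_locally_pseudo_gaussian:
  fixes U :: "(real^'d) set" and \<phi> :: "'d \<Rightarrow> real \<Rightarrow> real \<Rightarrow> real" and B :: "real^'d \<Rightarrow> real^'d^'d"
  defines "\<xi> \<equiv> \<lambda>m. mixed_partial (\<lambda>s t. ln (\<phi> m s t))"
  assumes U: "open U"
    and rns: "\<And>m. regularly_non_separable ((\<lambda>x. x $ m) ` U) (\<phi> m)"
    and B: "continuous_on U B" "\<And>u. u \<in> U \<Longrightarrow> invertible (B u)"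
    and diag: "\<And>u v. u \<in> U \<Longrightarrow> v \<in> U \<Longrightarrow>
      is_diag_mat (transpose (B u) ** diag_mat (\<lambda>m. \<xi> m (u $ m) (v $ m)) ** B v)"
    and split: "u0 \<in> U" "k \<noteq> l" "B u0 $ k $ i \<noteq> 0" "B u0 $ l $ i \<noteq> 0"
  obtains J where "open J" "J \<noteq> {}" "J \<subseteq> (\<lambda>x. x $ k) ` U" "pseudo_gaussian_on (J \<times> J) (\<phi> k)"
proof -
  define V where "V m = (\<lambda>x. x $ m) ` U" for m
  have V: "open (V m)" "C2_on (V m \<times> V m) (\<phi> m)" "\<forall>x\<in>V m. \<forall>y\<in>V m. \<phi> m x y > 0"
      "AE x in lborel. x \<in> V m \<longrightarrow> \<xi> m x x \<noteq> 0" for m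
    using rns[of m] unfolding regularly_non_separable_def V_def \<xi>_def by auto
  obtain a b where box: "u0 \<in> box a b"
      "\<And>u. u \<in> box a b \<Longrightarrow> u \<in> U \<and> B u $ k $ i \<noteq> 0 \<and> B u $ l $ i \<noteq> 0"
    using continuous_on_nonzero_entries_box[OF U B(1) split(1,3,4)] by blast
  then obtain w where w: "w \<in> box a b" "\<And>m. w $ m \<in> V m \<longrightarrow> \<xi> m (w $ m) (w $ m) \<noteq> 0"
    using AE_lborel_exists_in_box_cart[of "\<lambda>m x. x \<in> V m \<longrightarrow> \<xi> m x x \<noteq> 0"] V(4) by blast
  have w_diag: "\<xi> m (w $ m) (w $ m) \<noteq> 0" for m
    using w box(2)[OF w(1)] by (auto simp: V_def)
  define line where "line t = (\<chi> j. if j = k then t else w $ j)" for t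
  define I where "I = {a $ k<..<b $ k}"
  have line_I: "line t \<in> U \<and> B (line t) $ k $ i \<noteq> 0 \<and> B (line t) $ l $ i \<noteq> 0" if "t \<in> I" for t
    using w(1) that by (intro box(2)) (auto simp: mem_box_cart line_def I_def)
  have IV: "I \<subseteq> V k"
  proof
    fix t assume "t \<in> I"
    then have "line t \<in> U" using line_I by blast
    then show "t \<in> V k" unfolding V_def by (rule image_eqI[rotated]) (simp add: line_def)
  qed
  have continuous: "continuous_on (I \<times> I) (\<lambda>(x, y). \<xi> k x y)"
  proof -
    obtain Ly where "continuous_on (V k \<times> V k) (\<lambda>(x, y). \<xi> k x y)"
      using C2_on_ln_mixed_partial[OF V(1-3)] unfolding \<xi>_def by blast
    then show ?thesis using IV by (elim continuous_on_subset) auto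
  qed
  have "open I" "w $ k \<in> I" using w(1) by (simp_all add: I_def mem_box_cart)
  then obtain e where e: "e > 0" "ball (w $ k) e \<subseteq> I"
      "\<And>x y. x \<in> ball (w $ k) e \<Longrightarrow> y \<in> ball (w $ k) e \<Longrightarrow> \<xi> k x y \<noteq> 0"
    using continuous_on_nonzero_square_ball[OF continuous _ _ w_diag[of k]] by blast
  have line_J: "line t \<in> U \<and> B (line t) $ k $ i \<noteq> 0 \<and> B (line t) $ l $ i \<noteq> 0"
    if "t \<in> ball (w $ k) e" for t
    using line_I e(2) that by blast
  show thesis
  proof (rule that[of "ball (w $ k) e"])
    show "ball (w $ k) e \<subseteq> (\<lambda>x. x $ k) ` U" using IV e(2) by (simp add: V_def)
    show "pseudo_gaussian_on (ball (w $ k) e \<times> ball (w $ k) e) (\<phi> k)"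
      using IV e(2) by (intro pseudo_gaussian_on_coordinate_line[OF V(1-3) _ convex_ball _ diag[unfolded \<xi>_def]
          B(2) line_J[unfolded line_def] split(2) w_diag[unfolded \<xi>_def] e(3)[unfolded \<xi>_def]])
        (auto simp: \<open>e > 0\<close>)
  qed (use \<open>e > 0\<close> in auto)
qed

theorem lemma4p6:
  fixes U :: "(real^'d) set"
    and \<phi> :: "'d \<Rightarrow> real \<Rightarrow> real \<Rightarrow> real"
    and B :: "real^'d \<Rightarrow> real^'d^'d"
  assumes "open U"
    and "\<And>i. regularly_non_separable ((\<lambda>x. x$i) ` U) (\<phi> i)"
    and "\<exists>j. \<forall>i. i \<noteq> j \<longrightarrow>
           ae_non_gaussian_on (((\<lambda>x. x$i) ` U) \<times> ((\<lambda>x. x$i) ` U)) (\<phi> i)"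
    and "continuous_on U B"
    and "\<And>u. u \<in> U \<Longrightarrow> invertible (B u)"
    and "\<And>u v i j. u \<in> U \<Longrightarrow> v \<in> U \<Longrightarrow> i \<noteq> j \<Longrightarrow>
           (transpose (B u) **
             (\<chi> k l. if k = l then mixed_partial (\<lambda>s t. ln (\<phi> k s t)) (u$k) (v$k) else 0)
             ** B v) $ i $ j = 0"
  shows "\<forall>u\<in>U. monomial_matrix (B u)"
proof
  fix u assume u: "u \<in> U"
  obtain j where non_gaussian: "\<And>m. m \<noteq> j \<Longrightarrow>
      ae_non_gaussian_on (((\<lambda>x. x$m) ` U) \<times> ((\<lambda>x. x$m) ` U)) (\<phi> m)"
    using assms(3) by blast
  have diag: "is_diag_mat (transpose (B u) **
      diag_mat (\<lambda>m. mixed_partial (\<lambda>s t. ln (\<phi> m s t)) (u $ m) (v $ m)) ** B v)"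
    if "u \<in> U" "v \<in> U" for u v
    using assms(6)[OF that] by (simp add: is_diag_mat_def diag_mat_def)
  show "monomial_matrix (B u)"
  proof (rule monomial_matrixI[OF assms(5)[OF u]])
    fix i k l assume nonzero: "B u $ k $ i \<noteq> 0" "B u $ l $ i \<noteq> 0"
    show "k = l"
    proof (rule ccontr)
      assume "k \<noteq> l"
      then obtain k' l' where split: "k' \<noteq> j" "k' \<noteq> l'" "B u $ k' $ i \<noteq> 0" "B u $ l' $ i \<noteq> 0"
        using nonzero by (cases "k = j") (metis that)+
      obtain J where "open J" "J \<noteq> {}" "J \<subseteq> (\<lambda>x. x $ k') ` U"
          "pseudo_gaussian_on (J \<times> J) (\<phi> k')"
        using split_column_imp_locally_pseudo_gaussian[OF assms(1,2,4,5) diag u split(2-4)] .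
      then show False
        using ae_non_gaussian_on_imp_not_pseudo_gaussian_on[OF non_gaussian[OF split(1)]]
        by (simp add: open_Times Sigma_mono)
    qed
  qed
qed

end
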